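(* Let $K\ge1$, $\mathcal{X}$ a measurable space, $\mathcal{Z}=\mathcal{X}\times\{1,\ldots,K\}$, $\Theta$ a parameter set and $\ell:\Theta\times\mathcal{Z}\to\mathbb{R}_+$ measurable with $L=\sup_{(\theta,z)\in\Theta\times\mathcal{Z}}\ell(\theta,z)<\infty$. Let $Z'_i=(X'_i,S'_i)$, $i=1,\ldots,n$, be i.i.d. random elements of $\mathcal{Z}$ with $p'_k=\mathbb{P}(S'_1=k)$, and let $p_1,\ldots,p_K\ge0$ be given numbers with $\sum_k p_k=1$. Let $\varepsilon\in(0,1/2)$ and suppose $p'_k\in(\varepsilon,1-\varepsilon)$ for all $k$. Let $n'_k=\sum_{i=1}^n\mathbb{I}\{S'_i=k\}$ and define $$\widetilde{\mathcal{R}}_{w^*,n}(\theta)=\frac{1}{n}\sum_{i=1}^n\ell(\theta,Z'_i)\sum_{k=1}^K\mathbb{I}\{S'_i=k\}\frac{p_k}{p'_k},\qquad \widetilde{\mathcal{R}}_{\widehat{w}^*,n}(\theta)=\sum_{i=1}^n\ell(\theta,Z'_i)\sum_{k=1}^K\mathbb{I}\{S'_i=k\}\frac{p_k}{n'_k}.$$ Then for any $\delta\in(0,1)$, as soon as $n\ge 2\log(2K/\delta)/\varepsilon^2$, with probability larger than $1-\delta$, $$\sup_{\theta\in\Theta}\left|\widetilde{\mathcal{R}}_{\widehat{w}^*,n}(\theta)-\widetilde{\mathcal{R}}_{w^*,n}(\theta)\right|\le\frac{2L}{\varepsilon^2}\sqrt{\frac{\log(2K/\delta)}{2n}}.$$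
   Context: $\mathbb{I}\{\cdot\}$ denotes the indicator function. *)

theory Defs
  imports "HOL-Probability.Probability"
begin

definition count_class :: "(nat \<Rightarrow> 'a \<Rightarrow> nat) \<Rightarrow> nat \<Rightarrow> nat \<Rightarrow> 'a \<Rightarrow> real" where
  "count_class S n k \<omega> = (\<Sum>i=1..n. if S i \<omega> = k then 1 else 0)"

definition risk_true_w ::
  "('t \<Rightarrow> 'x \<times> nat \<Rightarrow> real) \<Rightarrow> (nat \<Rightarrow> 'a \<Rightarrow> 'x) \<Rightarrow> (nat \<Rightarrow> 'a \<Rightarrow> nat)
   \<Rightarrow> nat \<Rightarrow> nat \<Rightarrow> (nat \<Rightarrow> real) \<Rightarrow> (nat \<Rightarrow> real) \<Rightarrow> 't \<Rightarrow> 'a \<Rightarrow> real" where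
  "risk_true_w loss X S K n p p' \<theta> \<omega> =
     (1 / real n) * (\<Sum>i=1..n. loss \<theta> (X i \<omega>, S i \<omega>) *
        (\<Sum>k=1..K. (if S i \<omega> = k then 1 else 0) * (p k / p' k)))"

definition risk_est_w ::
  "('t \<Rightarrow> 'x \<times> nat \<Rightarrow> real) \<Rightarrow> (nat \<Rightarrow> 'a \<Rightarrow> 'x) \<Rightarrow> (nat \<Rightarrow> 'a \<Rightarrow> nat)
   \<Rightarrow> nat \<Rightarrow> nat \<Rightarrow> (nat \<Rightarrow> real) \<Rightarrow> 't \<Rightarrow> 'a \<Rightarrow> real" where
  "risk_est_w loss X S K n p \<theta> \<omega> =
     (\<Sum>i=1..n. loss \<theta> (X i \<omega>, S i \<omega>) *
        (\<Sum>k=1..K. (if S i \<omega> = k then 1 else 0) * (p k / count_class S n k \<omega>)))"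

end

theory Submission
  imports Defs
begin

text \<open>
  Grouping the observations by class, the difference is at most
  L \<Sum>_k p_k \<bar>n'_k / n - p'_k\<bar> / p'_k, hence at most L t / \<epsilon> as soon as every empirical class
  frequency n'_k / n is within t of p'_k. Hoeffding's inequality for the indicators of
  S'_i = k and a union bound over the K classes show that this happens with probability at
  least 1 - 2 K exp (-2 n t^2), which equals 1 - \<delta> for t = sqrt (log (2K/\<delta>) / (2n)).
  Since this event does not depend on \<theta>, no measurability of the loss is needed, and
  L t / \<epsilon> \<le> 2 L t / \<epsilon>^2 because \<epsilon> < 1/2.
\<close>

lemma (in prob_space) empirical_frequency_deviation_prob:
  fixes Z :: "'i \<Rightarrow> 'a \<Rightarrow> 'b" and t :: real
  assumes "finite I" "j \<in> I"
    and indep: "indep_vars (\<lambda>_. N) Z I"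
    and ident: "\<And>i. i \<in> I \<Longrightarrow> distr M N (Z i) = distr M N (Z j)"
    and B: "B \<in> sets N" and "t \<ge> 0"
  shows "prob {\<omega> \<in> space M. t \<le> \<bar>(\<Sum>i\<in>I. indicator B (Z i \<omega>)) / card I
            - prob {\<omega> \<in> space M. Z j \<omega> \<in> B}\<bar>} \<le> 2 * exp (- 2 * card I * t\<^sup>2)"
proof -
  have Z_meas: "Z i \<in> M \<rightarrow>\<^sub>M N" if "i \<in> I" for i
    using indep that unfolding indep_vars_def by blast
  have ind_meas: "(indicator B :: 'b \<Rightarrow> real) \<in> borel_measurable N"
    using B by simp
  interpret H: Hoeffding_ineq_iid M I "\<lambda>i \<omega>. indicator B (Z i \<omega>) :: real"
    "\<lambda>\<omega>. indicator B (Z j \<omega>) :: real" 0 1 "expectation (\<lambda>\<omega>. indicator B (Z j \<omega>))"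
  proof unfold_locales
    show "indep_vars (\<lambda>_. borel) (\<lambda>i \<omega>. indicator B (Z i \<omega>) :: real) I"
      using indep_vars_compose2[OF indep, of "\<lambda>_. indicator B :: 'b \<Rightarrow> real" "\<lambda>_. borel"] ind_meas by simp
  next
    fix i assume "i \<in> I"
    have "distr M borel (\<lambda>\<omega>. indicator B (Z i \<omega>) :: real) = distr (distr M N (Z i)) borel (indicator B)"
      using distr_distr[OF ind_meas Z_meas[OF \<open>i \<in> I\<close>]] by (simp add: comp_def)
    also have "\<dots> = distr M borel (\<lambda>\<omega>. indicator B (Z j \<omega>))"
      using distr_distr[OF ind_meas Z_meas[OF \<open>j \<in> I\<close>]] ident[OF \<open>i \<in> I\<close>] by (simp add: comp_def)
    finally show "distr M borel (\<lambda>\<omega>. indicator B (Z i \<omega>) :: real) = distr M borel (\<lambda>\<omega>. indicator B (Z j \<omega>))" .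
  next
    show "random_variable borel (\<lambda>\<omega>. indicator B (Z j \<omega>) :: real)"
      using measurable_compose[OF Z_meas[OF \<open>j \<in> I\<close>] ind_meas] by (simp add: comp_def)
  qed (simp_all add: \<open>finite I\<close>)
  have "expectation (\<lambda>\<omega>. indicator B (Z j \<omega>) :: real) = prob {\<omega> \<in> space M. Z j \<omega> \<in> B}"
  proof -
    have "expectation (\<lambda>\<omega>. indicator B (Z j \<omega>) :: real) = expectation (indicator {\<omega> \<in> space M. Z j \<omega> \<in> B})"
      by (rule Bochner_Integration.integral_cong) (auto simp: indicator_def)
    then show ?thesis by (simp add: Int_absorb2 subset_eq)
  qed
  moreover have "I \<noteq> {}"
    using \<open>j \<in> I\<close> by blast
  ultimately show ?thesis
    using H.Hoeffding_ineq_abs_ge'[OF \<open>t \<ge> 0\<close> _ \<open>I \<noteq> {}\<close>] by simp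
qed

lemma (in prob_space) empirical_frequencies_simultaneous_deviation:
  fixes Z :: "'i \<Rightarrow> 'a \<Rightarrow> 'b" and B :: "'k \<Rightarrow> 'b set" and t :: real
  assumes "finite I" "j \<in> I"
    and indep: "indep_vars (\<lambda>_. N) Z I"
    and ident: "\<And>i. i \<in> I \<Longrightarrow> distr M N (Z i) = distr M N (Z j)"
    and "finite J" and B: "\<And>k. k \<in> J \<Longrightarrow> B k \<in> sets N" and "t \<ge> 0"
  shows "\<exists>G \<in> events. prob G \<ge> 1 - 2 * card J * exp (- 2 * card I * t\<^sup>2) \<and>
           (\<forall>\<omega> \<in> G. \<forall>k \<in> J. \<bar>(\<Sum>i\<in>I. indicator (B k) (Z i \<omega>)) / card I
              - prob {\<omega> \<in> space M. Z j \<omega> \<in> B k}\<bar> < t)"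
proof -
  define bad where "bad k = {\<omega> \<in> space M. t \<le> \<bar>(\<Sum>i\<in>I. indicator (B k) (Z i \<omega>)) / card I
      - prob {\<omega> \<in> space M. Z j \<omega> \<in> B k}\<bar>}" for k
  have Z_meas: "Z i \<in> M \<rightarrow>\<^sub>M N" if "i \<in> I" for i
    using indep that unfolding indep_vars_def by blast
  have bad_events: "bad k \<in> events" if "k \<in> J" for k
  proof -
    have "(\<lambda>\<omega>. indicator (B k) (Z i \<omega>) :: real) \<in> borel_measurable M" if "i \<in> I" for i
      using measurable_compose[OF Z_meas[OF that] borel_measurable_indicator[OF B[OF \<open>k \<in> J\<close>]]]
      by (simp add: comp_def)
    then show ?thesis
      unfolding bad_def by measurable
  qed
  have "prob (\<Union>k\<in>J. bad k) \<le> (\<Sum>k\<in>J. prob (bad k))"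
    using bad_events \<open>finite J\<close> by (intro finite_measure_subadditive_finite) auto
  also have "\<dots> \<le> (\<Sum>k\<in>J. 2 * exp (- 2 * card I * t\<^sup>2))"
    unfolding bad_def
    by (intro sum_mono empirical_frequency_deviation_prob[OF \<open>finite I\<close> \<open>j \<in> I\<close> indep ident B \<open>t \<ge> 0\<close>])
  finally have "prob (\<Union>k\<in>J. bad k) \<le> 2 * card J * exp (- 2 * card I * t\<^sup>2)"
    by simp
  moreover have "(\<Union>k\<in>J. bad k) \<in> events"
    using bad_events \<open>finite J\<close> by auto
  ultimately have "prob (space M - (\<Union>k\<in>J. bad k)) \<ge> 1 - 2 * card J * exp (- 2 * card I * t\<^sup>2)"
    using prob_compl by simp
  moreover have "\<forall>\<omega> \<in> space M - (\<Union>k\<in>J. bad k). \<forall>k \<in> J. \<bar>(\<Sum>i\<in>I. indicator (B k) (Z i \<omega>)) / card I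
              - prob {\<omega> \<in> space M. Z j \<omega> \<in> B k}\<bar> < t"
    unfolding bad_def by auto
  ultimately show ?thesis
    using \<open>(\<Union>k\<in>J. bad k) \<in> events\<close> by blast
qed

lemma abs_inverse_weight_diff_mult_le:
  fixes c n q p \<epsilon> t :: real
  assumes "0 \<le> c" "0 < n" "0 < \<epsilon>" "\<epsilon> < q" "0 \<le> p" and dev: "\<bar>c / n - q\<bar> \<le> t"
  shows "\<bar>p / c - p / (n * q)\<bar> * c \<le> p * t / \<epsilon>"
proof (cases "c = 0")
  case True
  then show ?thesis
    using assms dev by simp
next
  case False
  have "\<bar>p / c - p / (n * q)\<bar> * c = \<bar>(p / c - p / (n * q)) * c\<bar>"
    using \<open>0 \<le> c\<close> by (simp add: abs_mult)
  also have "(p / c - p / (n * q)) * c = p * (q - c / n) / q"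
    using False assms by (simp add: field_simps)
  also have "\<bar>\<dots>\<bar> = p * \<bar>c / n - q\<bar> / q"
    using assms by (simp add: abs_mult abs_divide abs_minus_commute)
  also have "\<dots> \<le> p * t / q"
    using assms dev by (intro divide_right_mono mult_left_mono) auto
  also have "\<dots> \<le> p * t / \<epsilon>"
    using assms dev by (intro divide_left_mono mult_nonneg_nonneg) auto
  finally show ?thesis .
qed

lemma reweighted_sum_deviation_le:
  fixes l :: "'i \<Rightarrow> real" and s :: "'i \<Rightarrow> 'k" and p q c :: "'k \<Rightarrow> real"
  assumes "finite I" "I \<noteq> {}"
    and l: "\<And>i. i \<in> I \<Longrightarrow> \<bar>l i\<bar> \<le> L"
    and p: "\<And>k. k \<in> J \<Longrightarrow> 0 \<le> p k" and p_sum: "(\<Sum>k\<in>J. p k) = 1"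
    and q: "\<And>k. k \<in> J \<Longrightarrow> \<epsilon> < q k" and "0 < \<epsilon>"
    and c_eq: "\<And>k. c k = (\<Sum>i\<in>I. if s i = k then 1 else 0)"
    and dev: "\<And>k. k \<in> J \<Longrightarrow> \<bar>c k / card I - q k\<bar> \<le> t"
  shows "\<bar>(\<Sum>i\<in>I. l i * (\<Sum>k\<in>J. (if s i = k then 1 else 0) * (p k / c k)))
          - 1 / card I * (\<Sum>i\<in>I. l i * (\<Sum>k\<in>J. (if s i = k then 1 else 0) * (p k / q k)))\<bar>
         \<le> L * t / \<epsilon>"
proof -
  define d where "d k = p k / c k - p k / (card I * q k)" for k
  have "(\<Sum>i\<in>I. l i * (\<Sum>k\<in>J. (if s i = k then 1 else 0) * (p k / c k)))
          - 1 / card I * (\<Sum>i\<in>I. l i * (\<Sum>k\<in>J. (if s i = k then 1 else 0) * (p k / q k)))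
        = (\<Sum>i\<in>I. \<Sum>k\<in>J. l i * (if s i = k then 1 else 0) * d k)"
    by (simp add: d_def sum_distrib_left sum_subtractf[symmetric] algebra_simps)
  also have "\<bar>\<dots>\<bar> \<le> (\<Sum>i\<in>I. \<Sum>k\<in>J. L * ((if s i = k then 1 else 0) * \<bar>d k\<bar>))"
  proof (rule order_trans[OF sum_abs sum_mono], rule order_trans[OF sum_abs sum_mono])
    fix i k assume "i \<in> I"
    show "\<bar>l i * (if s i = k then 1 else 0) * d k\<bar> \<le> L * ((if s i = k then 1 else 0) * \<bar>d k\<bar>)"
      using l[OF \<open>i \<in> I\<close>] by (simp add: abs_mult mult_right_mono)
  qed
  also have "\<dots> = L * (\<Sum>k\<in>J. \<bar>d k\<bar> * c k)"
    by (subst sum.swap) (simp add: c_eq sum_distrib_left sum_distrib_right mult_ac)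
  also have "\<dots> \<le> L * (\<Sum>k\<in>J. p k * t / \<epsilon>)"
  proof (rule mult_left_mono[OF sum_mono])
    fix k assume "k \<in> J"
    have "0 \<le> c k"
      unfolding c_eq by (intro sum_nonneg) auto
    then show "\<bar>d k\<bar> * c k \<le> p k * t / \<epsilon>"
      unfolding d_def using assms \<open>k \<in> J\<close>
      by (intro abs_inverse_weight_diff_mult_le) (auto simp: card_gt_0_iff)
  next
    show "0 \<le> L"
      using l \<open>I \<noteq> {}\<close> by (meson abs_ge_zero all_not_in_conv order_trans)
  qed
  also have "\<dots> = L * t / \<epsilon>"
    using p_sum by (simp add: sum_divide_distrib[symmetric] sum_distrib_right[symmetric])
  finally show ?thesis .
qed

lemma (in prob_space) class_counts_concentrate:
  fixes X :: "nat \<Rightarrow> 'a \<Rightarrow> 'x" and S :: "nat \<Rightarrow> 'a \<Rightarrow> nat" and t :: real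
  assumes "0 < n"
    and indep: "indep_vars (\<lambda>_. Xsp \<Otimes>\<^sub>M count_space {1..K}) (\<lambda>i \<omega>. (X i \<omega>, S i \<omega>)) {1..n}"
    and ident: "\<And>i. i \<in> {1..n} \<Longrightarrow>
               distr M (Xsp \<Otimes>\<^sub>M count_space {1..K}) (\<lambda>\<omega>. (X i \<omega>, S i \<omega>)) =
               distr M (Xsp \<Otimes>\<^sub>M count_space {1..K}) (\<lambda>\<omega>. (X 1 \<omega>, S 1 \<omega>))"
    and "0 \<le> t"
  shows "\<exists>G \<in> events. prob G \<ge> 1 - 2 * real K * exp (- 2 * real n * t\<^sup>2) \<and>
           (\<forall>\<omega> \<in> G. \<forall>k \<in> {1..K}.
              \<bar>count_class S n k \<omega> / n - prob {\<omega> \<in> space M. S 1 \<omega> = k}\<bar> < t)"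
proof -
  have class_sets: "space Xsp \<times> {k} \<in> sets (Xsp \<Otimes>\<^sub>M count_space {1..K})" if "k \<in> {1..K}" for k
    using that by (intro pair_measureI) auto
  have meas: "(\<lambda>\<omega>. (X i \<omega>, S i \<omega>)) \<in> M \<rightarrow>\<^sub>M Xsp \<Otimes>\<^sub>M count_space {1..K}" if "i \<in> {1..n}" for i
    using indep that unfolding indep_vars_def by blast
  have in_space: "X i \<omega> \<in> space Xsp" if "i \<in> {1..n}" "\<omega> \<in> space M" for i \<omega>
    using measurable_space[OF meas[OF that(1)] that(2)] by (simp add: space_pair_measure)
  obtain G where "G \<in> events" "prob G \<ge> 1 - 2 * real K * exp (- 2 * real n * t\<^sup>2)" and freq: "\<forall>\<omega> \<in> G. \<forall>k \<in> {1..K}.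
      \<bar>(\<Sum>i\<in>{1..n}. indicator (space Xsp \<times> {k}) (X i \<omega>, S i \<omega>)) / n
       - prob {\<omega> \<in> space M. (X 1 \<omega>, S 1 \<omega>) \<in> space Xsp \<times> {k}}\<bar> < t"
    using empirical_frequencies_simultaneous_deviation[where J="{1..K}" and B="\<lambda>k. space Xsp \<times> {k}",
        OF _ _ indep ident _ class_sets \<open>0 \<le> t\<close>] \<open>0 < n\<close>
    by simp blast
  have count_eq: "(\<Sum>i\<in>{1..n}. indicator (space Xsp \<times> {k}) (X i \<omega>, S i \<omega>)) = count_class S n k \<omega>"
    if "\<omega> \<in> space M" for k \<omega>
    unfolding count_class_def using in_space that by (intro sum.cong) auto
  have class_event_eq:
    "{\<omega> \<in> space M. (X 1 \<omega>, S 1 \<omega>) \<in> space Xsp \<times> {k}} = {\<omega> \<in> space M. S 1 \<omega> = k}" for k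
    using in_space \<open>0 < n\<close> by auto
  show ?thesis
  proof (intro bexI[OF _ \<open>G \<in> events\<close>] conjI ballI)
    fix \<omega> k assume "\<omega> \<in> G" "k \<in> {1..K}"
    then have "\<omega> \<in> space M"
      using \<open>G \<in> events\<close> sets.sets_into_space by blast
    have "\<bar>(\<Sum>i\<in>{1..n}. indicator (space Xsp \<times> {k}) (X i \<omega>, S i \<omega>)) / n
        - prob {\<omega> \<in> space M. (X 1 \<omega>, S 1 \<omega>) \<in> space Xsp \<times> {k}}\<bar> < t"
      using freq \<open>\<omega> \<in> G\<close> \<open>k \<in> {1..K}\<close> by blast
    then show "\<bar>count_class S n k \<omega> / n - prob {\<omega> \<in> space M. S 1 \<omega> = k}\<bar> < t"
      unfolding count_eq[OF \<open>\<omega> \<in> space M\<close>] class_event_eq .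
  qed fact
qed

lemma risk_est_w_deviation_le:
  fixes loss :: "'t \<Rightarrow> 'x \<times> nat \<Rightarrow> real" and p q :: "nat \<Rightarrow> real"
  assumes "0 < n"
    and loss: "\<And>i. i \<in> {1..n} \<Longrightarrow> \<bar>loss \<theta> (X i \<omega>, S i \<omega>)\<bar> \<le> L"
    and p: "\<And>k. k \<in> {1..K} \<Longrightarrow> 0 \<le> p k" and p_sum: "(\<Sum>k=1..K. p k) = 1"
    and q: "\<And>k. k \<in> {1..K} \<Longrightarrow> \<epsilon> < q k" and "0 < \<epsilon>"
    and dev: "\<And>k. k \<in> {1..K} \<Longrightarrow> \<bar>count_class S n k \<omega> / n - q k\<bar> \<le> t"
  shows "\<bar>risk_est_w loss X S K n p \<theta> \<omega> - risk_true_w loss X S K n p q \<theta> \<omega>\<bar> \<le> L * t / \<epsilon>"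
  unfolding risk_est_w_def risk_true_w_def
  using reweighted_sum_deviation_le[where I="{1..n}" and c="\<lambda>k. count_class S n k \<omega>",
      OF _ _ loss p p_sum q \<open>0 < \<epsilon>\<close>] dev \<open>0 < n\<close>
  by (simp add: count_class_def)

lemma Hoeffding_union_radius:
  fixes K n :: nat and \<delta> :: real
  assumes "1 \<le> K" "0 < \<delta>" "\<delta> < 1" "0 < n"
  defines "t \<equiv> sqrt (ln (2 * real K / \<delta>) / (2 * real n))"
  shows "0 \<le> t" and "2 * real K * exp (- 2 * real n * t\<^sup>2) = \<delta>"
proof -
  have "0 < ln (2 * real K / \<delta>)"
    using assms by (intro ln_gt_zero) (simp_all add: field_simps)
  then have "0 \<le> t" and "2 * real n * t\<^sup>2 = ln (2 * real K / \<delta>)"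
    unfolding t_def using \<open>0 < n\<close> by simp_all
  then show "0 \<le> t" and "2 * real K * exp (- 2 * real n * t\<^sup>2) = \<delta>"
    using assms by (simp_all add: exp_minus field_simps)
qed

theorem lemma3:
  fixes M :: "'a measure" and Xsp :: "'x measure"
    and Theta :: "'t set" and loss :: "'t \<Rightarrow> 'x \<times> nat \<Rightarrow> real"
    and X :: "nat \<Rightarrow> 'a \<Rightarrow> 'x" and S :: "nat \<Rightarrow> 'a \<Rightarrow> nat"
    and K n :: nat and p :: "nat \<Rightarrow> real" and L \<epsilon> \<delta> :: real
  assumes "prob_space M"
    and "K \<ge> 1"
    and loss_meas: "\<And>\<theta>. \<theta> \<in> Theta \<Longrightarrow> loss \<theta> \<in> borel_measurable (Xsp \<Otimes>\<^sub>M count_space {1..K})"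
    and loss_nonneg: "\<And>\<theta> z. \<theta> \<in> Theta \<Longrightarrow> z \<in> space Xsp \<times> {1..K} \<Longrightarrow> loss \<theta> z \<ge> 0"
    and loss_bdd: "bdd_above ((\<lambda>(\<theta>, z). loss \<theta> z) ` (Theta \<times> (space Xsp \<times> {1..K})))"
    and L_def: "L = (SUP (\<theta>, z) \<in> Theta \<times> (space Xsp \<times> {1..K}). loss \<theta> z)"
    and rv: "\<And>i. i \<in> {1..n} \<Longrightarrow>
               (\<lambda>\<omega>. (X i \<omega>, S i \<omega>)) \<in> M \<rightarrow>\<^sub>M (Xsp \<Otimes>\<^sub>M count_space {1..K})"
    and indep: "prob_space.indep_vars M (\<lambda>_. Xsp \<Otimes>\<^sub>M count_space {1..K})
                  (\<lambda>i \<omega>. (X i \<omega>, S i \<omega>)) {1..n}"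
    and ident: "\<And>i. i \<in> {1..n} \<Longrightarrow>
               distr M (Xsp \<Otimes>\<^sub>M count_space {1..K}) (\<lambda>\<omega>. (X i \<omega>, S i \<omega>)) =
               distr M (Xsp \<Otimes>\<^sub>M count_space {1..K}) (\<lambda>\<omega>. (X 1 \<omega>, S 1 \<omega>))"
    and p_nonneg: "\<And>k. k \<in> {1..K} \<Longrightarrow> p k \<ge> 0"
    and p_sum: "(\<Sum>k=1..K. p k) = 1"
    and eps: "0 < \<epsilon>" "\<epsilon> < 1/2"
    and p'_range: "\<And>k. k \<in> {1..K} \<Longrightarrow>
               \<epsilon> < measure M {\<omega> \<in> space M. S 1 \<omega> = k} \<and>
               measure M {\<omega> \<in> space M. S 1 \<omega> = k} < 1 - \<epsilon>"
    and delta: "0 < \<delta>" "\<delta> < 1"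
    and n_large: "real n \<ge> 2 * ln (2 * real K / \<delta>) / \<epsilon>\<^sup>2"
  shows "\<exists>A \<in> sets M. measure M A \<ge> 1 - \<delta> \<and>
           (\<forall>\<omega> \<in> A. \<forall>\<theta> \<in> Theta.
              \<bar>risk_est_w loss X S K n p \<theta> \<omega>
               - risk_true_w loss X S K n p (\<lambda>k. measure M {\<omega> \<in> space M. S 1 \<omega> = k}) \<theta> \<omega>\<bar>
              \<le> 2 * L / \<epsilon>\<^sup>2 * sqrt (ln (2 * real K / \<delta>) / (2 * real n)))"
proof -
  interpret prob_space M by fact
  define t where "t = sqrt (ln (2 * real K / \<delta>) / (2 * real n))"
  have "0 < ln (2 * real K / \<delta>)"
    using \<open>K \<ge> 1\<close> delta by (intro ln_gt_zero) (simp_all add: field_simps)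
  then have "0 < n"
    using n_large eps by (smt (verit) divide_pos_pos of_nat_0_less_iff zero_less_power)
  then have "0 \<le> t" and tail_eq: "2 * real K * exp (- 2 * real n * t\<^sup>2) = \<delta>"
    unfolding t_def using Hoeffding_union_radius[OF \<open>K \<ge> 1\<close> delta] by simp_all
  then obtain G where "G \<in> events" "prob G \<ge> 1 - \<delta>" and dev: "\<forall>\<omega> \<in> G. \<forall>k \<in> {1..K}.
      \<bar>count_class S n k \<omega> / n - prob {\<omega> \<in> space M. S 1 \<omega> = k}\<bar> < t"
    using class_counts_concentrate[OF \<open>0 < n\<close> indep ident \<open>0 \<le> t\<close>] unfolding tail_eq by blast
  show ?thesis
  proof (intro bexI[OF _ \<open>G \<in> events\<close>] conjI ballI)
    fix \<omega> \<theta> assume "\<omega> \<in> G" "\<theta> \<in> Theta"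
    have Z: "(X i \<omega>, S i \<omega>) \<in> space Xsp \<times> {1..K}" if "i \<in> {1..n}" for i
      using measurable_space[OF rv[OF that]] \<open>\<omega> \<in> G\<close> \<open>G \<in> events\<close> sets.sets_into_space
      by (auto simp: space_pair_measure)
    have loss_le: "\<bar>loss \<theta> (X i \<omega>, S i \<omega>)\<bar> \<le> L" if "i \<in> {1..n}" for i
      using loss_nonneg[OF \<open>\<theta> \<in> Theta\<close> Z[OF that]] cSUP_upper[OF _ loss_bdd, of "(\<theta>, X i \<omega>, S i \<omega>)"]
        \<open>\<theta> \<in> Theta\<close> Z[OF that] unfolding L_def by auto
    have "\<bar>risk_est_w loss X S K n p \<theta> \<omega>
          - risk_true_w loss X S K n p (\<lambda>k. prob {\<omega> \<in> space M. S 1 \<omega> = k}) \<theta> \<omega>\<bar> \<le> L * t / \<epsilon>"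
      using dev \<open>\<omega> \<in> G\<close> p'_range
      by (intro risk_est_w_deviation_le[where loss=loss and X=X and S=S and \<theta>=\<theta> and \<omega>=\<omega>,
            OF \<open>0 < n\<close> loss_le p_nonneg p_sum _ eps(1)]) (simp_all add: less_imp_le)
    also have "\<dots> \<le> 2 * L / \<epsilon>\<^sup>2 * t"
      using mult_left_mono[of \<epsilon> 2 "L * t"] loss_le[of 1] \<open>0 < n\<close> \<open>0 \<le> t\<close> eps
      by (simp add: field_simps power2_eq_square)
    finally show "\<bar>risk_est_w loss X S K n p \<theta> \<omega>
               - risk_true_w loss X S K n p (\<lambda>k. measure M {\<omega> \<in> space M. S 1 \<omega> = k}) \<theta> \<omega>\<bar>
              \<le> 2 * L / \<epsilon>\<^sup>2 * sqrt (ln (2 * real K / \<delta>) / (2 * real n))"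
      unfolding t_def .
  qed fact
qed

end
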